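(* In an MFQST with degree bound $\phi=3$, every source has degree at most $2$. Moreover, if a source has degree $2$, then it is collinear with its two neighbours.
   Context: Let $Z=\{z_1,\dots,z_n\}\subset\mathbb{R}^2$ ($n\ge 1$) be a set of sources and $z_{BS}\in\mathbb{R}^2\setminus Z$ a sink; each source has supply $1$. A flow-dependent quadratic Steiner tree (FQST) consists of a finite set $S\subset\mathbb{R}^2$ of Steiner points and a tree $T$ with vertex set $Z\cup S\cup\{z_{BS}\}$ whose edges are directed towards $z_{BS}$. Every node other than the sink has exactly one out-edge, and the sink has none. Each edge $e$ carries a positive flow $f(e)$ such that: - at each source, the flow on its out-edge minus the total flow on its in-edges equals $1$; - at each Steiner point, the out-flow equals the total in-flow; - the sink receives total flow $n$. The cost is $L(T)=\sum_{e\in E(T)} f(e)|e|^2$. An MFQST with degree bound $\phi$ is an FQST minimising $L$ among all FQSTs (any finite $S$, any topology) in which every Steiner point has degree at least $\phi$. *)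

theory Defs
  imports "HOL-Analysis.Analysis"
begin

type_synonym pt = "real ^ 2"

text \<open>An FQST for sources Z and sink zBS is given by a finite set S of Steiner points
 (distinct from sources and sink), a parent map p (the unique out-edge of each non-sink
 node v is the edge (v, p v)), and the flow f v on the out-edge of v.\<close>

definition fqst_nodes :: "pt set \<Rightarrow> pt \<Rightarrow> pt set \<Rightarrow> pt set" where
  "fqst_nodes Z zBS S = Z \<union> S \<union> {zBS}"

definition children :: "pt set \<Rightarrow> pt set \<Rightarrow> (pt \<Rightarrow> pt) \<Rightarrow> pt \<Rightarrow> pt set" where
  "children Z S p v = {u \<in> Z \<union> S. p u = v}"

definition is_FQST ::
  "pt set \<Rightarrow> pt \<Rightarrow> pt set \<Rightarrow> (pt \<Rightarrow> pt) \<Rightarrow> (pt \<Rightarrow> real) \<Rightarrow> bool" where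
  "is_FQST Z zBS S p f \<longleftrightarrow>
     finite S \<and> S \<inter> (Z \<union> {zBS}) = {} \<and>
     (\<forall>v \<in> Z \<union> S. p v \<in> fqst_nodes Z zBS S \<and> p v \<noteq> v) \<and>
     (\<forall>v \<in> Z \<union> S. \<exists>k. (p ^^ k) v = zBS) \<and>
     (\<forall>v \<in> Z \<union> S. f v > 0) \<and>
     (\<forall>z \<in> Z. f z - (\<Sum>u \<in> children Z S p z. f u) = 1) \<and>
     (\<forall>s \<in> S. f s = (\<Sum>u \<in> children Z S p s. f u)) \<and>
     (\<Sum>u \<in> children Z S p zBS. f u) = real (card Z)"

definition fqst_cost :: "pt set \<Rightarrow> pt set \<Rightarrow> (pt \<Rightarrow> pt) \<Rightarrow> (pt \<Rightarrow> real) \<Rightarrow> real" where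
  "fqst_cost Z S p f = (\<Sum>v \<in> Z \<union> S. f v * (norm (v - p v))\<^sup>2)"

definition fqst_nbrs :: "pt set \<Rightarrow> pt \<Rightarrow> pt set \<Rightarrow> (pt \<Rightarrow> pt) \<Rightarrow> pt \<Rightarrow> pt set" where
  "fqst_nbrs Z zBS S p v = children Z S p v \<union> (if v = zBS then {} else {p v})"

definition fqst_deg :: "pt set \<Rightarrow> pt \<Rightarrow> pt set \<Rightarrow> (pt \<Rightarrow> pt) \<Rightarrow> pt \<Rightarrow> nat" where
  "fqst_deg Z zBS S p v = card (fqst_nbrs Z zBS S p v)"

definition is_MFQST ::
  "pt set \<Rightarrow> pt \<Rightarrow> nat \<Rightarrow> pt set \<Rightarrow> (pt \<Rightarrow> pt) \<Rightarrow> (pt \<Rightarrow> real) \<Rightarrow> bool" where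
  "is_MFQST Z zBS \<phi> S p f \<longleftrightarrow>
     is_FQST Z zBS S p f \<and> (\<forall>s \<in> S. fqst_deg Z zBS S p s \<ge> \<phi>) \<and>
     (\<forall>S' p' f'. is_FQST Z zBS S' p' f' \<and> (\<forall>s \<in> S'. fqst_deg Z zBS S' p' s \<ge> \<phi>)
        \<longrightarrow> fqst_cost Z S p f \<le> fqst_cost Z S' p' f')"

end

theory Submission
  imports Defs
begin

text \<open>
  The proof is a first-variation argument.  Let q be the parent of z and U a nonempty
  set of children of z.  Re-attach U and z to a fresh Steiner point s = z - t g attached
  to q, where g = sum_{u in U} f(u) (z - u) + f(z) (z - q) is the resultant pull on z.
  The result is again an admissible tree (s has degree at least 3, old Steiner points
  keep their degree), and its cost differs from the old one by 2 t |g|^2 (f(z) t - 1),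
  which is negative for small t > 0 unless g = 0.  Hence every such g vanishes
  (balance at the source).  Balance for {u1}, {u2} and {u1, u2} forces f(z)(z - q) = 0,
  so z has at most one child; balance for a single child u makes z, q, u collinear.
\<close>

lemma funpow_reaches_by_measure:
  fixes p :: "'a \<Rightarrow> 'a" and D :: "'a \<Rightarrow> nat"
  assumes step: "\<forall>v\<in>A. (p v \<in> A \<or> p v = r) \<and> (p v \<in> A \<longrightarrow> D (p v) < D v)"
  shows "v \<in> A \<Longrightarrow> \<exists>k. (p ^^ k) v = r"
proof (induction v rule: measure_induct_rule[where f = D])
  case (less v)
  show ?case
  proof (cases "p v = r")
    case True
    then have "(p ^^ 1) v = r" by simp
    then show ?thesis by blast
  next
    case False
    then have "p v \<in> A" "D (p v) < D v" using step less.prems by auto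
    then obtain k where "(p ^^ k) (p v) = r" using less.IH by blast
    then have "(p ^^ Suc k) v = r" by (simp only: funpow_Suc_right o_apply)
    then show ?thesis by blast
  qed
qed

lemma least_hitting_time_parent:
  fixes p :: "'a \<Rightarrow> 'a"
  assumes "\<exists>k. (p ^^ k) v = r" and "v \<noteq> r"
  shows "(LEAST k. (p ^^ k) (p v) = r) < (LEAST k. (p ^^ k) v = r)"
proof -
  define m where "m = (LEAST k. (p ^^ k) v = r)"
  have "(p ^^ m) v = r" unfolding m_def using assms(1) by (rule LeastI_ex)
  moreover from this obtain m' where m': "m = Suc m'" using assms(2) by (cases m) auto
  ultimately have "(p ^^ m') (p v) = r" by (simp only: funpow_Suc_right o_apply)
  then have "(LEAST k. (p ^^ k) (p v) = r) \<le> m'" by (rule Least_le)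
  then show ?thesis using m' m_def by simp
qed

lemma norm_shift_sq:
  fixes a z g :: "'a::real_inner" and t :: real
  shows "(norm (a - (z - t *\<^sub>R g)))\<^sup>2 = (norm (a - z))\<^sup>2 + 2 * t * inner (a - z) g + t\<^sup>2 * (norm g)\<^sup>2"
proof -
  have "a - (z - t *\<^sub>R g) = (a - z) + t *\<^sub>R g" by simp
  then have "(norm (a - (z - t *\<^sub>R g)))\<^sup>2 = inner ((a - z) + t *\<^sub>R g) ((a - z) + t *\<^sub>R g)"
    by (simp only: power2_norm_eq_inner)
  also have "\<dots> = inner (a - z) (a - z) + 2 * t * inner (a - z) g + t\<^sup>2 * inner g g"
    by (simp add: inner_add_left inner_add_right inner_commute[of g "a - z"] power2_eq_square ring_distribs)
  finally show ?thesis by (simp add: power2_norm_eq_inner)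
qed

text \<open>First variation of the split: moving s from z by -t g, where g is the resultant
  weighted pull of U (weights w) and q (weight c) on z, changes the local cost by
  2 t |g|^2 (c t - 1).\<close>

lemma split_cost_variation:
  fixes z q :: "'a::real_inner" and U :: "'a set" and w :: "'a \<Rightarrow> real" and c t :: real
  defines "g \<equiv> (\<Sum>u\<in>U. w u *\<^sub>R (z - u)) + c *\<^sub>R (z - q)"
  defines "s \<equiv> z - t *\<^sub>R g"
  shows "c * (norm (s - q))\<^sup>2 + (\<Sum>v\<in>U. w v * ((norm (v - s))\<^sup>2 - (norm (v - z))\<^sup>2))
           + (c - sum w U) * (norm (z - s))\<^sup>2 - c * (norm (z - q))\<^sup>2
         = 2 * t * (norm g)\<^sup>2 * (c * t - 1)"
proof -
  define G where "G = (\<Sum>u\<in>U. w u *\<^sub>R (z - u))"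
  have g_norm: "inner G g + c * inner (z - q) g = (norm g)\<^sup>2"
    unfolding g_def G_def power2_norm_eq_inner by (simp add: inner_add_left)
  have inner_U: "(\<Sum>v\<in>U. w v * inner (v - z) g) = - inner G g"
  proof -
    have "(\<Sum>v\<in>U. w v * inner (v - z) g) = inner (\<Sum>v\<in>U. w v *\<^sub>R (v - z)) g"
      by (simp add: inner_sum_left)
    also have "(\<Sum>v\<in>U. w v *\<^sub>R (v - z)) = - G"
      unfolding G_def by (simp add: sum_negf[symmetric] scaleR_diff_right)
    finally show ?thesis by simp
  qed
  have U_terms: "(\<Sum>v\<in>U. w v * ((norm (v - s))\<^sup>2 - (norm (v - z))\<^sup>2))
      = - 2 * t * inner G g + t\<^sup>2 * (norm g)\<^sup>2 * sum w U"
  proof -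
    have "(\<Sum>v\<in>U. w v * ((norm (v - s))\<^sup>2 - (norm (v - z))\<^sup>2))
        = (\<Sum>v\<in>U. 2 * t * (w v * inner (v - z) g) + t\<^sup>2 * (norm g)\<^sup>2 * w v)"
      unfolding s_def norm_shift_sq by (simp add: algebra_simps)
    also have "\<dots> = 2 * t * (\<Sum>v\<in>U. w v * inner (v - z) g) + t\<^sup>2 * (norm g)\<^sup>2 * sum w U"
      by (simp add: sum.distrib sum_distrib_left)
    finally show ?thesis using inner_U by simp
  qed
  have zs: "(norm (z - s))\<^sup>2 = t\<^sup>2 * (norm g)\<^sup>2"
    unfolding s_def norm_shift_sq by simp
  have sq: "(norm (s - q))\<^sup>2 = (norm (z - q))\<^sup>2 - 2 * t * inner (z - q) g + t\<^sup>2 * (norm g)\<^sup>2"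
    using norm_shift_sq[of q z t g]
    by (simp add: s_def norm_minus_commute inner_diff_left algebra_simps)
  have "c * (norm (s - q))\<^sup>2 + (\<Sum>v\<in>U. w v * ((norm (v - s))\<^sup>2 - (norm (v - z))\<^sup>2))
           + (c - sum w U) * (norm (z - s))\<^sup>2 - c * (norm (z - q))\<^sup>2
      = - 2 * t * (inner G g + c * inner (z - q) g) + 2 * c * t\<^sup>2 * (norm g)\<^sup>2"
    unfolding U_terms zs sq by (simp add: algebra_simps)
  also have "\<dots> = 2 * t * (norm g)\<^sup>2 * (c * t - 1)"
    unfolding g_norm by (simp add: algebra_simps power2_eq_square)
  finally show ?thesis .
qed

text \<open>A line meets a finite set in finitely many points, so a parameter in any open
  interval avoids it.\<close>

lemma exists_param_avoiding:
  fixes z g :: "'a::real_vector"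
  assumes "finite B" and "g \<noteq> 0" and "a < b"
  shows "\<exists>t. a < t \<and> t < b \<and> z - t *\<^sub>R g \<notin> B"
proof -
  have "inj (\<lambda>t::real. z - t *\<^sub>R g)"
    using assms(2) by (auto intro: injI)
  then have "finite ((\<lambda>t. z - t *\<^sub>R g) -` B)" using assms(1) by (rule finite_vimageI[rotated])
  then have "infinite ({a<..<b} - (\<lambda>t. z - t *\<^sub>R g) -` B)"
    using assms(3) by (simp add: Diff_infinite_finite)
  then obtain t where "t \<in> {a<..<b} - (\<lambda>t. z - t *\<^sub>R g) -` B"
    using infinite_imp_nonempty by blast
  then show ?thesis by auto
qed

lemma collinear_of_balance:
  fixes z q u :: "'a::real_vector"
  assumes "c *\<^sub>R (z - u) + d *\<^sub>R (z - q) = 0" and "c \<noteq> 0"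
  shows "collinear {z, q, u}"
proof -
  have "u = z + (d / c) *\<^sub>R (z - q)"
  proof -
    have "c *\<^sub>R (u - z) = d *\<^sub>R (z - q)"
      using assms(1) by (simp add: algebra_simps)
    then have "(1 / c) *\<^sub>R (c *\<^sub>R (u - z)) = (d / c) *\<^sub>R (z - q)" by simp
    then show ?thesis using assms(2) by (simp add: algebra_simps)
  qed
  then have "\<forall>x\<in>{z, q, u}. \<exists>a. x = z + a *\<^sub>R (z - q)"
    by (auto intro: exI[of _ 0] exI[of _ "-1"])
  then show ?thesis unfolding collinear_alt by blast
qed

lemma fqst_nbrs_non_sink:
  "w \<noteq> zBS \<Longrightarrow> fqst_nbrs Z zBS S p w = insert (p w) (children Z S p w)"
  unfolding fqst_nbrs_def by auto

locale fqst =
  fixes Z :: "pt set" and zBS :: pt and S :: "pt set" and p :: "pt \<Rightarrow> pt" and f :: "pt \<Rightarrow> real"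
  assumes is_fqst: "is_FQST Z zBS S p f"
    and finite_sources: "finite Z" and sink_not_source: "zBS \<notin> Z"
begin

lemma finite_steiner: "finite S"
  and steiner_disjoint: "S \<inter> (Z \<union> {zBS}) = {}"
  and reaches_sink: "v \<in> Z \<union> S \<Longrightarrow> \<exists>k. (p ^^ k) v = zBS"
  and flow_pos: "v \<in> Z \<union> S \<Longrightarrow> 0 < f v"
  and source_balance: "z \<in> Z \<Longrightarrow> f z = 1 + sum f (children Z S p z)"
  and steiner_balance: "w \<in> S \<Longrightarrow> f w = sum f (children Z S p w)"
  and sink_balance: "sum f (children Z S p zBS) = real (card Z)"
  using is_fqst unfolding is_FQST_def by (auto simp: algebra_simps)

lemma parent_node: "v \<in> Z \<union> S \<Longrightarrow> p v \<in> Z \<union> S \<or> p v = zBS"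
  and parent_ne: "v \<in> Z \<union> S \<Longrightarrow> p v \<noteq> v"
  using is_fqst unfolding is_FQST_def fqst_nodes_def by auto

lemma finite_nodes: "finite (Z \<union> S)"
  using finite_sources finite_steiner by simp

lemma sink_not_node: "zBS \<notin> Z \<union> S"
  using sink_not_source steiner_disjoint by auto

lemma children_nodes: "children Z S p w \<subseteq> Z \<union> S"
  unfolding children_def by auto

lemma finite_children: "finite (children Z S p w)"
  using finite_nodes children_nodes by (rule finite_subset[rotated])

definition depth :: "pt \<Rightarrow> nat" where
  "depth v = (LEAST k. (p ^^ k) v = zBS)"

lemma depth_parent: "v \<in> Z \<union> S \<Longrightarrow> depth (p v) < depth v"
  unfolding depth_def using reaches_sink sink_not_node
  by (intro least_hitting_time_parent) auto

lemma no_two_cycle: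
  assumes "a \<in> Z \<union> S" and "b \<in> Z \<union> S" and "p a = b" and "p b = a"
  shows False
  using depth_parent[OF assms(1)] depth_parent[OF assms(2)] assms(3,4) by simp

text \<open>A source is joined to its parent and to its children, and the parent is not a child.\<close>

lemma source_degree:
  assumes "z \<in> Z"
  shows "fqst_deg Z zBS S p z = Suc (card (children Z S p z))"
proof -
  have "p z \<notin> children Z S p z"
    using no_two_cycle[of z "p z"] assms unfolding children_def by auto
  moreover have "z \<noteq> zBS" using assms sink_not_source by auto
  ultimately show ?thesis
    unfolding fqst_deg_def fqst_nbrs_non_sink[OF \<open>z \<noteq> zBS\<close>] using finite_children by simp
qed

end

text \<open>Flows are adjusted so that conservation holds:
  s carries the flow f z of the old edge z q, and z keeps only the flow that did not
  come from U.\<close>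

locale fqst_split = fqst +
  fixes z :: pt and U :: "pt set" and s :: pt
  assumes source: "z \<in> Z" and U_children: "U \<subseteq> children Z S p z"
    and fresh: "s \<notin> Z \<union> S \<union> {zBS}"
begin

abbreviation q :: pt where "q \<equiv> p z"

definition p' :: "pt \<Rightarrow> pt" where
  "p' x = (if x \<in> U \<or> x = z then s else if x = s then q else p x)"

definition f' :: "pt \<Rightarrow> real" where
  "f' x = (if x = z then f z - sum f U else if x = s then f z else f x)"

lemma z_node: "z \<in> Z \<union> S"
  using source by simp

lemma U_nodes: "U \<subseteq> Z \<union> S" and parent_U: "u \<in> U \<Longrightarrow> p u = z"
  using U_children children_nodes unfolding children_def by auto

lemma finite_U: "finite U"
  using U_children finite_children by (rule finite_subset)

lemma z_notin_U: "z \<notin> U"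
  using parent_U parent_ne z_node by auto

lemma q_notin_U: "q \<notin> U"
  using parent_U no_two_cycle[OF z_node] U_nodes by auto

lemma q_ne_z: "q \<noteq> z"
  using parent_ne z_node by blast

lemma s_ne_node: "v \<in> Z \<union> S \<Longrightarrow> v \<noteq> s" and s_ne_sink: "s \<noteq> zBS"
  using fresh by auto

lemma parent_ne_s: "v \<in> Z \<union> S \<Longrightarrow> p v \<noteq> s"
  using parent_node fresh by fastforce

lemma q_ne_s: "q \<noteq> s"
  using parent_ne_s z_node by blast

lemma p'_U: "u \<in> U \<Longrightarrow> p' u = s" and p'_z: "p' z = s" and p'_s: "p' s = q"
  and p'_other: "v \<notin> U \<Longrightarrow> v \<noteq> z \<Longrightarrow> v \<noteq> s \<Longrightarrow> p' v = p v"
  unfolding p'_def using fresh U_nodes z_node by auto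

lemma f'_z: "f' z = f z - sum f U" and f'_s: "f' s = f z"
  and f'_other: "v \<noteq> z \<Longrightarrow> v \<noteq> s \<Longrightarrow> f' v = f v"
  unfolding f'_def using s_ne_node[OF z_node] by auto

lemma nodes': "Z \<union> insert s S = insert s (Z \<union> S)"
  by auto

lemma children'_s: "children Z (insert s S) p' s = insert z U"
proof -
  have "v \<in> insert z U" if "v \<in> insert s (Z \<union> S)" "p' v = s" for v
    using that p'_s q_ne_s p'_other parent_ne_s by (cases "v = s") fastforce+
  moreover have "insert z U \<subseteq> insert s (Z \<union> S)" using z_node U_nodes by auto
  ultimately show ?thesis unfolding children_def nodes' using p'_U p'_z by auto
qed

lemma children'_non_s:
  assumes "w \<noteq> s"
  shows "children Z (insert s S) p' w
           = (children Z S p w - U - {z}) \<union> (if w = q then {s} else {})"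
proof -
  have "v \<in> (children Z S p w - U - {z}) \<union> (if w = q then {s} else {})"
    if "v \<in> insert s (Z \<union> S)" "p' v = w" for v
  proof (cases "v = s")
    case True then show ?thesis using that p'_s by auto
  next
    case False
    then have "v \<in> Z \<union> S" "v \<notin> U" "v \<noteq> z" using that p'_U p'_z assms by auto
    then show ?thesis using that p'_other False unfolding children_def by auto
  qed
  moreover have "v \<in> insert s (Z \<union> S) \<and> p' v = w"
    if "v \<in> (children Z S p w - U - {z}) \<union> (if w = q then {s} else {})" for v
    using that p'_s p'_other s_ne_node children_nodes
    unfolding children_def by (auto split: if_splits)
  ultimately show ?thesis unfolding children_def[of Z "insert s S"] nodes' by blast
qed

lemma z_child_of_q: "z \<in> children Z S p q"
  using z_node unfolding children_def by simp

lemma U_disjoint_children: "w \<noteq> z \<Longrightarrow> U \<inter> children Z S p w = {}"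
  using parent_U unfolding children_def by auto

lemma children'_q: "children Z (insert s S) p' q = insert s (children Z S p q - {z})"
proof -
  have "children Z S p q - U = children Z S p q"
    using U_disjoint_children[OF q_ne_z] by blast
  then show ?thesis using children'_non_s[OF q_ne_s] by auto
qed

lemma z_not_own_child: "z \<notin> children Z S p z"
  using parent_ne z_node unfolding children_def by auto

lemma children'_z: "children Z (insert s S) p' z = children Z S p z - U"
proof -
  have "z \<noteq> q" using q_ne_z by simp
  then have "children Z (insert s S) p' z = children Z S p z - U - {z}"
    using children'_non_s[OF s_ne_node[OF z_node]] by simp
  also have "\<dots> = children Z S p z - U" using z_not_own_child by blast
  finally show ?thesis .
qed

lemma children'_other:
  assumes "w \<noteq> s" and "w \<noteq> z" and "w \<noteq> q"
  shows "children Z (insert s S) p' w = children Z S p w"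
proof -
  have "z \<notin> children Z S p w" using assms(3) unfolding children_def by auto
  then show ?thesis
    using children'_non_s[OF assms(1)] U_disjoint_children[OF assms(2)] assms(3) by auto
qed

lemma s_not_child: "s \<notin> children Z S p w"
  using children_nodes s_ne_node by blast

lemma inflow'_other:
  assumes "w \<noteq> s" and "w \<noteq> z"
  shows "sum f' (children Z (insert s S) p' w) = sum f (children Z S p w)"
proof (cases "w = q")
  case True
  have "sum f' (children Z (insert s S) p' w) = f' s + sum f' (children Z S p q - {z})"
    using True children'_q finite_children s_not_child by simp
  also have "sum f' (children Z S p q - {z}) = sum f (children Z S p q - {z})"
    using s_not_child by (intro sum.cong refl f'_other) blast+
  also have "f' s + \<dots> = sum f (children Z S p q)"
    using f'_s sum.remove[OF finite_children z_child_of_q, of f] by simp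
  finally show ?thesis using True by simp
next
  case False
  have "z \<notin> children Z S p w" using False unfolding children_def by auto
  then show ?thesis
    unfolding children'_other[OF assms False] using s_not_child
    by (intro sum.cong refl f'_other) blast+
qed

lemma inflow'_z: "sum f' (children Z (insert s S) p' z) = sum f (children Z S p z) - sum f U"
proof -
  have "sum f' (children Z S p z - U) = sum f (children Z S p z - U)"
    using s_not_child z_not_own_child by (intro sum.cong refl f'_other) blast+
  also have "\<dots> = sum f (children Z S p z) - sum f U"
    by (rule sum_diff[OF finite_children U_children])
  finally show ?thesis unfolding children'_z .
qed

lemma inflow'_s: "sum f' (children Z (insert s S) p' s) = f z"
proof -
  have "sum f' U = sum f U"
    using z_notin_U U_nodes s_ne_node by (intro sum.cong refl f'_other) blast+
  then show ?thesis
    unfolding children'_s using sum.insert[OF finite_U z_notin_U, of f'] f'_z by simp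
qed

lemma parent'_valid:
  assumes "v \<in> Z \<union> insert s S"
  shows "p' v \<in> fqst_nodes Z zBS (insert s S) \<and> p' v \<noteq> v"
proof -
  consider "v \<in> U \<or> v = z" | "v = s" | "v \<in> Z \<union> S" "v \<notin> U" "v \<noteq> z" "v \<noteq> s"
    using assms by auto
  then show ?thesis
  proof cases
    case 1
    then have "p' v = s" and "v \<in> Z \<union> S" using p'_U p'_z U_nodes z_node by auto
    then show ?thesis using s_ne_node unfolding fqst_nodes_def by auto
  next
    case 2
    then show ?thesis using p'_s parent_node[OF z_node] q_ne_s unfolding fqst_nodes_def by auto
  next
    case 3
    then show ?thesis using p'_other parent_node parent_ne unfolding fqst_nodes_def by auto
  qed
qed

text \<open>Every node of the split tree still reaches the sink: twice the old depth, with
  depth 2 depth(z) - 1 for s, decreases along every new edge.\<close>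

lemma reaches_sink':
  assumes "v \<in> Z \<union> insert s S"
  shows "\<exists>k. (p' ^^ k) v = zBS"
proof -
  define D where "D v = (if v = s then 2 * depth z - 1 else 2 * depth v)" for v
  have depth_z: "0 < depth z" using depth_parent[OF z_node] by simp
  have step: "\<forall>v\<in>Z \<union> insert s S. (p' v \<in> Z \<union> insert s S \<or> p' v = zBS)
                 \<and> (p' v \<in> Z \<union> insert s S \<longrightarrow> D (p' v) < D v)"
  proof
    fix v assume v: "v \<in> Z \<union> insert s S"
    consider "v \<in> U" | "v = z" | "v = s" | "v \<in> Z \<union> S" "v \<notin> U" "v \<noteq> z" "v \<noteq> s"
      using v by auto
    then show "(p' v \<in> Z \<union> insert s S \<or> p' v = zBS)
                \<and> (p' v \<in> Z \<union> insert s S \<longrightarrow> D (p' v) < D v)"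
    proof cases
      case 1
      then have "p' v = s" "v \<noteq> s" "depth z < depth v"
        using p'_U U_nodes s_ne_node depth_parent parent_U by force+
      then show ?thesis unfolding D_def by simp
    next
      case 2
      then have "p' v = s" "v \<noteq> s" using p'_z s_ne_node[OF z_node] by auto
      then show ?thesis using 2 depth_z unfolding D_def by simp
    next
      case 3
      have "q \<in> Z \<union> S \<or> q = zBS" using parent_node[OF z_node] .
      moreover have "depth q < depth z" using depth_parent[OF z_node] .
      ultimately show ?thesis using 3 p'_s q_ne_s unfolding D_def by auto
    next
      case 4
      then have "p' v = p v" "p v \<noteq> s" "p v \<in> Z \<union> S \<or> p v = zBS" "depth (p v) < depth v"
        using p'_other parent_ne_s parent_node depth_parent by auto
      then show ?thesis using 4 unfolding D_def by auto
    qed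
  qed
  show ?thesis by (rule funpow_reaches_by_measure[OF step assms])
qed

lemma is_FQST_split: "is_FQST Z zBS (insert s S) p' f'"
proof -
  have "f' v > 0" if "v \<in> Z \<union> insert s S" for v
  proof -
    have "sum f U \<le> sum f (children Z S p z)"
      using flow_pos children_nodes
      by (intro sum_mono2[OF finite_children U_children]) (auto intro: less_imp_le)
    then have "f' z \<ge> 1" using f'_z source_balance[OF source] by simp
    then show ?thesis
      using that f'_s f'_other flow_pos z_node by (cases "v = z"; cases "v = s") auto
  qed
  moreover have "f' z' - sum f' (children Z (insert s S) p' z') = 1" if "z' \<in> Z" for z'
  proof (cases "z' = z")
    case True
    then show ?thesis using f'_z inflow'_z source_balance[OF source] by simp
  next
    case False
    have "z' \<noteq> s" using that s_ne_node by auto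
    then show ?thesis using False that f'_other inflow'_other source_balance by simp
  qed
  moreover have "f' w = sum f' (children Z (insert s S) p' w)" if "w \<in> insert s S" for w
  proof (cases "w = s")
    case True
    then show ?thesis using f'_s inflow'_s by simp
  next
    case False
    then have "w \<in> S" "w \<noteq> z" using that source steiner_disjoint by auto
    then show ?thesis using False f'_other inflow'_other steiner_balance by simp
  qed
  moreover have "sum f' (children Z (insert s S) p' zBS) = real (card Z)"
    using inflow'_other[OF s_ne_sink[symmetric]] source sink_not_source sink_balance by auto
  ultimately show ?thesis
    unfolding is_FQST_def
    using finite_steiner steiner_disjoint fresh parent'_valid reaches_sink' by auto
qed

text \<open>The old Steiner points keep their degree: each one either keeps its neighbourhood,
  or (for a child in U) trades neighbour z for s, or (for q) trades child z for child s.\<close>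

lemma degree'_steiner:
  assumes "w \<in> S"
  shows "fqst_deg Z zBS (insert s S) p' w = fqst_deg Z zBS S p w"
proof -
  have w: "w \<in> Z \<union> S" "w \<noteq> z" "w \<noteq> s" "w \<noteq> zBS"
    using assms source steiner_disjoint s_ne_node by auto
  have nbrs: "fqst_nbrs Z zBS S p w = insert (p w) (children Z S p w)"
    and nbrs': "fqst_nbrs Z zBS (insert s S) p' w = insert (p' w) (children Z (insert s S) p' w)"
    using w(4) by (rule fqst_nbrs_non_sink)+
  consider "w \<in> U" | "w = q" | "w \<notin> U" "w \<noteq> q" by blast
  then show ?thesis
  proof cases
    case 1
    then have "w \<noteq> q" using q_notin_U by auto
    then have "z \<notin> children Z S p w" unfolding children_def by auto
    moreover have "p' w = s" "p w = z" using 1 p'_U parent_U by auto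
    ultimately show ?thesis
      unfolding fqst_deg_def nbrs nbrs' children'_other[OF w(3,2) \<open>w \<noteq> q\<close>]
      using s_not_child finite_children by simp
  next
    case 2
    define A where "A = fqst_nbrs Z zBS S p q"
    have "p q \<noteq> z" using no_two_cycle[OF z_node] w(1) 2 by auto
    then have "fqst_nbrs Z zBS (insert s S) p' w = insert s (A - {z})"
      unfolding nbrs' A_def 2 fqst_nbrs_non_sink[OF w(4)[unfolded 2]] children'_q
      using p'_other[OF q_notin_U q_ne_z q_ne_s] by auto
    moreover have "z \<in> A" "s \<notin> A" "finite A"
      using z_child_of_q s_not_child parent_ne_s[OF w(1)] 2 finite_children
      unfolding A_def fqst_nbrs_non_sink[OF w(4)[unfolded 2]] by auto
    then have "card (insert s (A - {z})) = card A"
      using card_insert_disjoint[of "A - {z}" s] card_Suc_Diff1[of A z] by simp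
    ultimately show ?thesis unfolding fqst_deg_def A_def 2 by simp
  next
    case 3
    then show ?thesis
      unfolding fqst_deg_def nbrs nbrs' children'_other[OF w(3,2) 3(2)]
      using p'_other[OF 3(1) w(2,3)] by simp
  qed
qed

lemma degree'_new:
  assumes "U \<noteq> {}"
  shows "3 \<le> fqst_deg Z zBS (insert s S) p' s"
proof -
  obtain u where u: "u \<in> U" using assms by blast
  then have "u \<noteq> z" "u \<noteq> q" using z_notin_U q_notin_U by auto
  then have "card {u, z, q} = 3" using q_ne_z by simp
  moreover have "{u, z, q} \<subseteq> fqst_nbrs Z zBS (insert s S) p' s"
    using u unfolding fqst_nbrs_non_sink[OF s_ne_sink] children'_s p'_s by auto
  moreover have "finite (fqst_nbrs Z zBS (insert s S) p' s)"
    using finite_U unfolding fqst_nbrs_non_sink[OF s_ne_sink] children'_s by simp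
  ultimately show ?thesis unfolding fqst_deg_def by (metis card_mono)
qed

text \<open>Only the edges at z, s and the children in U change, so the cost changes by a
  local term.\<close>

lemma cost_split:
  "fqst_cost Z (insert s S) p' f' = fqst_cost Z S p f
     + (f z * (norm (s - q))\<^sup>2 + (\<Sum>v\<in>U. f v * ((norm (v - s))\<^sup>2 - (norm (v - z))\<^sup>2))
        + (f z - sum f U) * (norm (z - s))\<^sup>2 - f z * (norm (z - q))\<^sup>2)"
proof -
  define c where "c v = f v * (norm (v - p v))\<^sup>2" for v
  define \<delta> where "\<delta> v = (if v \<in> U then f v * ((norm (v - s))\<^sup>2 - (norm (v - z))\<^sup>2) else 0)
      + (if v = z then (f z - sum f U) * (norm (z - s))\<^sup>2 - f z * (norm (z - q))\<^sup>2 else 0)" for v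
  have term': "f' v * (norm (v - p' v))\<^sup>2 = c v + \<delta> v" if "v \<in> Z \<union> S" for v
  proof -
    consider "v \<in> U" | "v = z" | "v \<notin> U" "v \<noteq> z" by blast
    then show ?thesis
    proof cases
      case 1
      then have "v \<noteq> z" using z_notin_U by auto
      moreover have "p' v = s" "p v = z" "f' v = f v"
        using 1 \<open>v \<noteq> z\<close> s_ne_node[OF that] p'_U parent_U f'_other by auto
      ultimately show ?thesis using 1 unfolding c_def \<delta>_def by (simp add: algebra_simps)
    next
      case 2
      then show ?thesis using z_notin_U p'_z f'_z unfolding c_def \<delta>_def by simp
    next
      case 3
      then show ?thesis
        using s_ne_node[OF that] p'_other f'_other unfolding c_def \<delta>_def by simp
    qed
  qed
  have "s \<notin> Z \<union> S" using fresh by blast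
  then have "fqst_cost Z (insert s S) p' f'
      = f' s * (norm (s - p' s))\<^sup>2 + (\<Sum>v\<in>Z \<union> S. f' v * (norm (v - p' v))\<^sup>2)"
    unfolding fqst_cost_def nodes' by (rule sum.insert[OF finite_nodes])
  also have "(\<Sum>v\<in>Z \<union> S. f' v * (norm (v - p' v))\<^sup>2) = (\<Sum>v\<in>Z \<union> S. c v + \<delta> v)"
    using term' by (rule sum.cong[OF refl])
  finally have "fqst_cost Z (insert s S) p' f'
      = f' s * (norm (s - p' s))\<^sup>2 + (\<Sum>v\<in>Z \<union> S. c v + \<delta> v)" .
  also have "(\<Sum>v\<in>Z \<union> S. \<delta> v)
      = (\<Sum>v\<in>U. f v * ((norm (v - s))\<^sup>2 - (norm (v - z))\<^sup>2))
        + ((f z - sum f U) * (norm (z - s))\<^sup>2 - f z * (norm (z - q))\<^sup>2)"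
    unfolding \<delta>_def sum.distrib using finite_nodes U_nodes z_node
    by (simp add: sum.inter_restrict[symmetric] Int_absorb1)
  ultimately show ?thesis
    unfolding fqst_cost_def c_def sum.distrib using f'_s p'_s by simp
qed

end

text \<open>Otherwise
  splitting z towards the resultant g by a small step t < 1/f(z) yields an admissible
  tree (the new Steiner point has degree at least 3) that is cheaper by
  2 t |g|^2 (1 - f(z) t) > 0.\<close>

lemma MFQST_source_balance:
  assumes M: "is_MFQST Z zBS 3 S p f" and "finite Z" and "zBS \<notin> Z"
    and z: "z \<in> Z" and U: "U \<subseteq> children Z S p z" "U \<noteq> {}"
  shows "(\<Sum>u\<in>U. f u *\<^sub>R (z - u)) + f z *\<^sub>R (z - p z) = 0"
proof (rule ccontr)
  interpret fqst Z zBS S p f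
    using assms by unfold_locales (auto simp: is_MFQST_def)
  define g where "g = (\<Sum>u\<in>U. f u *\<^sub>R (z - u)) + f z *\<^sub>R (z - p z)"
  assume "(\<Sum>u\<in>U. f u *\<^sub>R (z - u)) + f z *\<^sub>R (z - p z) \<noteq> 0"
  then have "g \<noteq> 0" unfolding g_def .
  have fz: "0 < f z" using flow_pos z by simp
  have "finite (Z \<union> S \<union> {zBS})" using finite_nodes by simp
  then obtain t where t: "0 < t" "t < 1 / f z" "z - t *\<^sub>R g \<notin> Z \<union> S \<union> {zBS}"
    using exists_param_avoiding[where z = z and a = 0 and b = "1 / f z"] \<open>g \<noteq> 0\<close> fz
    by (meson divide_pos_pos zero_less_one)
  interpret split: fqst_split Z zBS S p f z U "z - t *\<^sub>R g"
    using z U t by unfold_locales auto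
  have "\<forall>w\<in>insert (z - t *\<^sub>R g) S. 3 \<le> fqst_deg Z zBS (insert (z - t *\<^sub>R g) S) split.p' w"
    using M split.degree'_steiner split.degree'_new[OF U(2)] unfolding is_MFQST_def by auto
  then have "fqst_cost Z S p f \<le> fqst_cost Z (insert (z - t *\<^sub>R g) S) split.p' split.f'"
    using M split.is_FQST_split unfolding is_MFQST_def by blast
  moreover have "fqst_cost Z (insert (z - t *\<^sub>R g) S) split.p' split.f'
      = fqst_cost Z S p f + 2 * t * (norm g)\<^sup>2 * (f z * t - 1)"
    using split.cost_split split_cost_variation[where w = f and U = U and c = "f z" and q = "p z"]
    unfolding g_def by simp
  moreover have "2 * t * (norm g)\<^sup>2 * (f z * t - 1) < 0"
  proof -
    have "f z * t < 1" using t(2) fz by (simp add: field_simps)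
    then show ?thesis using t(1) \<open>g \<noteq> 0\<close> by (simp add: mult_pos_neg)
  qed
  ultimately show False by linarith
qed

text \<open>Two distinct children u1, u2 would give, by balance for {u1}, {u2} and {u1, u2},
  that the parent edge carries no pull, which is impossible.\<close>

lemma MFQST_source_at_most_one_child:
  assumes M: "is_MFQST Z zBS 3 S p f" and "finite Z" and "zBS \<notin> Z" and z: "z \<in> Z"
  shows "card (children Z S p z) \<le> 1"
proof (rule ccontr)
  interpret fqst Z zBS S p f
    using assms by unfold_locales (auto simp: is_MFQST_def)
  let ?pull = "\<lambda>u. f u *\<^sub>R (z - u)" and ?up = "f z *\<^sub>R (z - p z)"
  assume "\<not> card (children Z S p z) \<le> 1"
  then obtain u1 u2 where u: "u1 \<in> children Z S p z" "u2 \<in> children Z S p z" "u1 \<noteq> u2"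
    by (metis One_nat_def card_le_Suc0_iff_eq finite_children)
  have balance: "(\<Sum>u\<in>U. ?pull u) + ?up = 0" if "U \<subseteq> children Z S p z" "U \<noteq> {}" for U
    using MFQST_source_balance[OF assms that] .
  have "?pull u1 + ?up = 0" "?pull u2 + ?up = 0" "?pull u1 + ?pull u2 + ?up = 0"
    using balance[of "{u1}"] balance[of "{u2}"] balance[of "{u1, u2}"] u by simp_all
  then have "?up = 0" by (metis add.left_neutral add_diff_cancel_right' diff_add_cancel)
  moreover have "f z \<noteq> 0" "z - p z \<noteq> 0" using flow_pos parent_ne z by force+
  ultimately show False by simp
qed

lemma MFQST_source_collinear:
  assumes M: "is_MFQST Z zBS 3 S p f" and "finite Z" and "zBS \<notin> Z" and z: "z \<in> Z"
    and child: "children Z S p z = {u}"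
  shows "collinear {z, p z, u}"
proof -
  interpret fqst Z zBS S p f
    using assms by unfold_locales (auto simp: is_MFQST_def)
  have "f u *\<^sub>R (z - u) + f z *\<^sub>R (z - p z) = 0"
    using MFQST_source_balance[OF M assms(2,3) z, of "{u}"] child by simp
  moreover have "f u \<noteq> 0" using flow_pos children_nodes child by fastforce
  ultimately show ?thesis by (rule collinear_of_balance)
qed

theorem mainTheorem10:
  fixes Z :: "pt set" and zBS :: pt and S :: "pt set" and p :: "pt \<Rightarrow> pt" and f :: "pt \<Rightarrow> real"
  assumes "finite Z" and "Z \<noteq> {}" and "zBS \<notin> Z"
    and "is_MFQST Z zBS 3 S p f"
  shows "\<forall>z \<in> Z. fqst_deg Z zBS S p z \<le> 2 \<and>
           (fqst_deg Z zBS S p z = 2 \<longrightarrow> collinear (insert z (fqst_nbrs Z zBS S p z)))"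
proof
  interpret fqst Z zBS S p f
    using assms by unfold_locales (auto simp: is_MFQST_def)
  fix z assume z: "z \<in> Z"
  have deg: "fqst_deg Z zBS S p z = Suc (card (children Z S p z))"
    using source_degree[OF z] .
  have one_child: "card (children Z S p z) \<le> 1"
    using MFQST_source_at_most_one_child[OF assms(4,1,3) z] .
  have "collinear (insert z (fqst_nbrs Z zBS S p z))" if two: "fqst_deg Z zBS S p z = 2"
  proof -
    obtain u where u: "children Z S p z = {u}"
      using two deg by (auto simp: card_1_singleton_iff)
    have "z \<noteq> zBS" using z assms(3) by auto
    then have "insert z (fqst_nbrs Z zBS S p z) = {z, p z, u}"
      unfolding fqst_nbrs_non_sink[OF \<open>z \<noteq> zBS\<close>] u by simp
    then show ?thesis using MFQST_source_collinear[OF assms(4,1,3) z u] by simp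
  qed
  then show "fqst_deg Z zBS S p z \<le> 2 \<and>
      (fqst_deg Z zBS S p z = 2 \<longrightarrow> collinear (insert z (fqst_nbrs Z zBS S p z)))"
    using deg one_child by simp
qed

end
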